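(* Let $k$ be a field and for $n\ge1$ let $B_n=k[x,y]\big[(x-1)/(x^ny-1)\big]\subset k(x,y)$, where $k[x,y]$ is a polynomial ring in two variables. Then $B_n$ is degree-rigid for each $n\ge 1$, i.e. every non-negative degree function $\delta:B_n\to\mathbb{N}\cup\{-\infty\}$ satisfies $\delta(f)=0$ for all nonzero $f\in B_n$.
   Context: A degree function on an integral domain $R$ is a map $\deg:R\to\mathbb{Z}\cup\{-\infty\}$ such that $\deg r=-\infty$ iff $r=0$, $\deg(rs)=\deg r+\deg s$, and $\deg(r+s)\le\max\{\deg r,\deg s\}$; it is non-negative if its values lie in $\mathbb{N}\cup\{-\infty\}$. $R$ is degree-rigid if every non-negative degree function on $R$ is trivial (zero on all nonzero elements). *)

theory Defs
  imports "HOL-Computational_Algebra.Polynomial" "HOL-Computational_Algebra.Fraction_Field"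
begin

text \<open>Bivariate polynomials k[x,y] are modelled as 'a poly poly: the inner
variable is x, the outer variable is y. The fraction field k(x,y) is
('a poly poly) fract.\<close>

definition var_x :: "'a::field poly poly" where "var_x = [:[:0, 1:]:]"
definition var_y :: "'a::field poly poly" where "var_y = [:0, 1:]"

definition gen_B :: "nat \<Rightarrow> 'a::field poly poly fract" where
  "gen_B n = Fract (var_x - 1) (var_x ^ n * var_y - 1)"

definition B :: "nat \<Rightarrow> 'a::field poly poly fract set" where
  "B n = {poly (map_poly (\<lambda>a. Fract a 1) P) (gen_B n) | P :: 'a poly poly poly. True}"

text \<open>The value -\<infinity> at 0 is implicit: the function is only constrained on nonzero
elements (the axioms involving 0 hold trivially with deg 0 = -\<infinity>).\<close>
definition nonneg_degree_function :: "'b::idom set \<Rightarrow> ('b \<Rightarrow> int) \<Rightarrow> bool" where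
  "nonneg_degree_function R \<delta> \<longleftrightarrow>
     (\<forall>r\<in>R. r \<noteq> 0 \<longrightarrow> \<delta> r \<ge> 0) \<and>
     (\<forall>r\<in>R. \<forall>s\<in>R. r \<noteq> 0 \<longrightarrow> s \<noteq> 0 \<longrightarrow> \<delta> (r * s) = \<delta> r + \<delta> s) \<and>
     (\<forall>r\<in>R. \<forall>s\<in>R. r \<noteq> 0 \<longrightarrow> s \<noteq> 0 \<longrightarrow> r + s \<noteq> 0 \<longrightarrow> \<delta> (r + s) \<le> max (\<delta> r) (\<delta> s))"

definition degree_rigid :: "'b::idom set \<Rightarrow> bool" where
  "degree_rigid R \<longleftrightarrow>
     (\<forall>\<delta>. nonneg_degree_function R \<delta> \<longrightarrow> (\<forall>r\<in>R. r \<noteq> 0 \<longrightarrow> \<delta> r = 0))"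

end

theory Submission
  imports Defs "HOL-Computational_Algebra.Polynomial_Factorial"
begin

text \<open>
  Write \<open>g = (x - 1)/(x\<^sup>n y - 1)\<close> and \<open>D = x\<^sup>n y - 1\<close>, so that \<open>g D = x - 1\<close>. The element
  \<open>h = g x\<^sup>n\<^sup>-\<^sup>1 y - 1\<close> of \<open>B\<^sub>n\<close> satisfies a second relation \<open>h D = 1 - x\<^sup>n\<^sup>-\<^sup>1 y\<close>.
  If \<open>\<delta> x > 0\<close>, then \<open>\<delta> D \<ge> n \<delta> x + \<delta> y\<close>, and the first relation gives
  \<open>\<delta> g + \<delta> D \<le> \<delta> x\<close>, forcing \<open>(n - 1) \<delta> x + \<delta> y = 0\<close>; then the second relation gives
  \<open>\<delta> D \<le> 0\<close>, a contradiction. So \<open>\<delta> x = 0\<close>, and the first relation yields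
  \<open>\<delta> y = \<delta> g = 0\<close>. As nonzero constants are units, \<open>B\<^sub>n\<close> is generated by elements of
  degree \<open>\<le> 0\<close>, so every nonzero element has degree 0.
\<close>

locale nonneg_degree_subring =
  fixes R :: "'b::idom set" and d :: "'b \<Rightarrow> int"
  assumes one_mem: "1 \<in> R"
    and minus_mem: "x \<in> R \<Longrightarrow> - x \<in> R"
    and add_mem: "x \<in> R \<Longrightarrow> y \<in> R \<Longrightarrow> x + y \<in> R"
    and mult_mem: "x \<in> R \<Longrightarrow> y \<in> R \<Longrightarrow> x * y \<in> R"
    and degree_function: "nonneg_degree_function R d"
begin

lemma deg_nonneg: "r \<in> R \<Longrightarrow> r \<noteq> 0 \<Longrightarrow> d r \<ge> 0"
  using degree_function unfolding nonneg_degree_function_def by blast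

lemma deg_mult:
  "r \<in> R \<Longrightarrow> s \<in> R \<Longrightarrow> r \<noteq> 0 \<Longrightarrow> s \<noteq> 0 \<Longrightarrow> d (r * s) = d r + d s"
  using degree_function unfolding nonneg_degree_function_def by blast

lemma deg_add_le:
  "r \<in> R \<Longrightarrow> s \<in> R \<Longrightarrow> r \<noteq> 0 \<Longrightarrow> s \<noteq> 0 \<Longrightarrow> r + s \<noteq> 0 \<Longrightarrow> d (r + s) \<le> max (d r) (d s)"
  using degree_function unfolding nonneg_degree_function_def by blast

lemma diff_mem: "x \<in> R \<Longrightarrow> y \<in> R \<Longrightarrow> x - y \<in> R"
  unfolding diff_conv_add_uminus by (intro add_mem minus_mem)

lemma power_mem: "r \<in> R \<Longrightarrow> r ^ k \<in> R"
  by (induction k) (auto intro: one_mem mult_mem)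

lemma deg_one: "d 1 = 0"
  using deg_mult[OF one_mem one_mem] by simp

lemma deg_minus_one: "d (- 1) = 0"
  using deg_mult[OF minus_mem minus_mem, OF one_mem one_mem] deg_one by simp

lemma deg_minus: "r \<in> R \<Longrightarrow> r \<noteq> 0 \<Longrightarrow> d (- r) = d r"
  using deg_mult[OF minus_mem[OF one_mem], of r] deg_minus_one by simp

lemma deg_unit: "r \<in> R \<Longrightarrow> s \<in> R \<Longrightarrow> r * s = 1 \<Longrightarrow> d r = 0"
proof -
  assume rs: "r \<in> R" "s \<in> R" "r * s = 1"
  then have "r \<noteq> 0" "s \<noteq> 0" by auto
  then show ?thesis using deg_mult[OF rs(1,2)] rs deg_one deg_nonneg[OF rs(1)] deg_nonneg[OF rs(2)] by simp
qed

lemma deg_power: "r \<in> R \<Longrightarrow> r \<noteq> 0 \<Longrightarrow> d (r ^ k) = int k * d r"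
proof (induction k)
  case (Suc k)
  then show ?case
    using deg_mult[OF Suc.prems(1) power_mem[OF Suc.prems(1), of k]]
    by (simp add: algebra_simps)
qed (simp add: deg_one)

lemma deg_one_diff_le:
  assumes "r \<in> R" "r \<noteq> 0" "1 - r \<noteq> 0"
  shows "d (1 - r) \<le> max 0 (d r)"
  using deg_add_le[OF one_mem minus_mem[of r]] assms deg_one deg_minus by simp

lemma deg_le_diff_one:
  assumes "r \<in> R" "r \<noteq> 0" "r - 1 \<noteq> 0"
  shows "d r \<le> max (d (r - 1)) 0"
  using deg_add_le[OF diff_mem[OF _ one_mem] one_mem, of r] assms deg_one by simp

lemma deg_diff_one_le:
  assumes "r \<in> R" "r \<noteq> 0" "r - 1 \<noteq> 0"
  shows "d (r - 1) \<le> max (d r) 0"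
  using deg_add_le[OF _ minus_mem[OF one_mem], of r] assms deg_minus_one by simp

lemma deg_eq_zero_of_relation:
  fixes x y g :: 'b and m :: nat
  assumes x: "x \<in> R" "x \<noteq> 0" "x - 1 \<noteq> 0" and y: "y \<in> R" "y \<noteq> 0" and g: "g \<in> R"
    and E: "1 - x ^ m * y \<noteq> 0"
    and rel: "g * (x ^ Suc m * y - 1) = x - 1"
  shows "d x = 0 \<and> d y = 0 \<and> d g = 0"
proof -
  define D where "D = x ^ Suc m * y - 1"
  define h where "h = g * x ^ m * y - 1"
  have xmy: "x ^ m * y \<in> R" "x ^ m * y \<noteq> 0"
    using x y by (simp_all add: mult_mem power_mem)
  have xny: "x ^ Suc m * y \<in> R" "x ^ Suc m * y \<noteq> 0"
    using x y by (simp_all add: mult_mem power_mem del: power_Suc)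
  have D: "D \<in> R" "D \<noteq> 0" and g0: "g \<noteq> 0"
    using rel x xny unfolding D_def by (auto intro: diff_mem one_mem)
  have h_rel: "h * D = 1 - x ^ m * y"
  proof -
    have "h * D = x ^ m * y * (g * D) - D"
      unfolding h_def by (simp add: algebra_simps)
    also have "\<dots> = x ^ m * y * (x - 1) - D"
      using rel unfolding D_def by simp
    also have "\<dots> = 1 - x ^ m * y"
      unfolding D_def by (simp add: algebra_simps)
    finally show ?thesis .
  qed
  have h: "h \<in> R" "h \<noteq> 0"
    using h_rel E unfolding h_def using g x(1) y(1) by (auto intro!: diff_mem mult_mem power_mem one_mem)
  have "d g + d D = d (x - 1)"
    using deg_mult[OF g D(1) g0 D(2)] rel unfolding D_def by simp
  also have "\<dots> \<le> d x"
    using deg_diff_one_le[OF x] deg_nonneg[OF x(1,2)] by simp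
  finally have rel_bound: "d g + d D \<le> d x" .
  have "d h + d D = d (1 - x ^ m * y)"
    using deg_mult[OF h(1) D(1) h(2) D(2)] h_rel by simp
  also have "\<dots> \<le> max 0 (int m * d x + d y)"
    using deg_one_diff_le[OF xmy E] deg_mult[OF power_mem[OF x(1)] y(1)] deg_power[OF x(1,2)] x y
    by simp
  finally have h_rel_bound: "d h + d D \<le> max 0 (int m * d x + d y)" .
  have "int m * d x + d x + d y = d (x ^ Suc m * y)"
    using deg_mult[OF power_mem[OF x(1)] y(1)] deg_power[OF x(1,2)] x y
    by (simp add: algebra_simps del: power_Suc)
  also have "\<dots> \<le> max (d D) 0"
    using deg_le_diff_one[OF xny] D(2) unfolding D_def by simp
  finally have D_bound: "int m * d x + d x + d y \<le> max (d D) 0" .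
  have nonneg: "d x \<ge> 0" "d y \<ge> 0" "d g \<ge> 0" "d h \<ge> 0" "d D \<ge> 0" "int m * d x \<ge> 0"
    using deg_nonneg x y g g0 h D by simp_all
  have "d x = 0"
  proof (rule ccontr)
    assume "d x \<noteq> 0"
    then show False
      using rel_bound h_rel_bound D_bound nonneg by linarith
  qed
  then show ?thesis
    using rel_bound D_bound nonneg by auto
qed

definition degree_nonpos :: "'b \<Rightarrow> bool" where
  "degree_nonpos r \<longleftrightarrow> r \<in> R \<and> (r \<noteq> 0 \<longrightarrow> d r \<le> 0)"

lemma degree_nonpos_zero: "degree_nonpos 0"
  using add_mem[OF one_mem minus_mem[OF one_mem]] by (simp add: degree_nonpos_def)

lemma degree_nonpos_add: "degree_nonpos r \<Longrightarrow> degree_nonpos s \<Longrightarrow> degree_nonpos (r + s)"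
  using deg_add_le[of r s] add_mem[of r s] unfolding degree_nonpos_def
  by (cases "r = 0 \<or> s = 0 \<or> r + s = 0") auto

lemma degree_nonpos_mult: "degree_nonpos r \<Longrightarrow> degree_nonpos s \<Longrightarrow> degree_nonpos (r * s)"
  using deg_mult[of r s] mult_mem[of r s] unfolding degree_nonpos_def
  by (cases "r = 0 \<or> s = 0") auto

lemma deg_eq_zero_if_nonpos: "degree_nonpos r \<Longrightarrow> r \<noteq> 0 \<Longrightarrow> d r = 0"
  using deg_nonneg unfolding degree_nonpos_def by force

end

lemma to_fract_power: "to_fract (p ^ k) = to_fract p ^ k"
  by (induction k) simp_all

lemma B_eq_fract_poly: "B n = {poly (fract_poly P) (gen_B n) | P. True}"
  unfolding B_def by (simp add: to_fract_def[symmetric])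

lemma nonneg_degree_subring_B:
  assumes "nonneg_degree_function (B n) \<delta>"
  shows "nonneg_degree_subring (B n) \<delta>"
proof
  show "1 \<in> B n"
    unfolding B_eq_fract_poly by (intro CollectI exI[of _ 1]) simp
  show "- r \<in> B n" if r: "r \<in> B n" for r
  proof -
    obtain P where "r = poly (fract_poly P) (gen_B n)"
      using r unfolding B_eq_fract_poly by blast
    then have "- r = poly (fract_poly (- P)) (gen_B n)"
      using fract_poly_diff[of 0 P] by simp
    then show ?thesis unfolding B_eq_fract_poly by blast
  qed
  show "r + s \<in> B n" if "r \<in> B n" "s \<in> B n" for r s
  proof -
    obtain P Q where "r = poly (fract_poly P) (gen_B n)" "s = poly (fract_poly Q) (gen_B n)"
      using \<open>r \<in> B n\<close> \<open>s \<in> B n\<close> unfolding B_eq_fract_poly by blast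
    then have "r + s = poly (fract_poly (P + Q)) (gen_B n)" by simp
    then show ?thesis unfolding B_eq_fract_poly by blast
  qed
  show "r * s \<in> B n" if "r \<in> B n" "s \<in> B n" for r s
  proof -
    obtain P Q where "r = poly (fract_poly P) (gen_B n)" "s = poly (fract_poly Q) (gen_B n)"
      using \<open>r \<in> B n\<close> \<open>s \<in> B n\<close> unfolding B_eq_fract_poly by blast
    then have "r * s = poly (fract_poly (P * Q)) (gen_B n)" by simp
    then show ?thesis unfolding B_eq_fract_poly by blast
  qed
qed (fact assms)

lemma to_fract_mem_B: "to_fract (p :: 'a::field poly poly) \<in> B n"
  unfolding B_eq_fract_poly by (intro CollectI exI[of _ "[:p:]"]) (simp add: map_poly_pCons)

lemma gen_B_mem_B: "gen_B n \<in> B n"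
  unfolding B_eq_fract_poly by (intro CollectI exI[of _ "[:0, 1:]"]) (simp add: map_poly_pCons)

lemma B_induct [consumes 1]:
  assumes "r \<in> B n"
    and "P 0"
    and const: "\<And>c. P (to_fract [:[:c:]:])"
    and "P (to_fract var_x)" and "P (to_fract var_y)" and "P (gen_B n)"
    and add: "\<And>r s. P r \<Longrightarrow> P s \<Longrightarrow> P (r + s)"
    and mult: "\<And>r s. P r \<Longrightarrow> P s \<Longrightarrow> P (r * s)"
  shows "P r"
proof -
  have in_x: "P (to_fract [:p:])" for p
  proof (induction p)
    case (pCons c p)
    have "to_fract [:pCons c p:] = to_fract [:[:c:]:] + to_fract var_x * to_fract [:p:]"
      by (simp add: var_x_def flip: to_fract_add to_fract_mult)
    then show ?case using const pCons.IH assms by simp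
  qed (simp add: assms)
  have in_xy: "P (to_fract q)" for q
  proof (induction q)
    case (pCons p q)
    have "to_fract (pCons p q) = to_fract [:p:] + to_fract var_y * to_fract q"
      by (simp add: var_y_def flip: to_fract_add to_fract_mult)
    then show ?case using in_x pCons.IH assms by simp
  qed (simp add: assms)
  have "P (poly (fract_poly Q) (gen_B n))" for Q
    by (induction Q) (simp_all add: in_xy assms map_poly_pCons)
  then show ?thesis
    using \<open>r \<in> B n\<close> unfolding B_eq_fract_poly by auto
qed

lemma one_minus_mult_var_y_neq_zero: "1 - p * var_y \<noteq> (0 :: 'a::field poly poly)"
proof
  assume "1 - p * var_y = 0"
  then have "coeff (1 - p * var_y) 0 = 0" by simp
  then show False by (simp add: var_y_def)
qed

lemma gen_B_relation:
  "gen_B n * (to_fract var_x ^ n * to_fract var_y - 1) = (to_fract var_x - 1 :: 'a::field poly poly fract)"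
proof -
  have "var_x ^ n * var_y - 1 \<noteq> (0 :: 'a poly poly)"
    using one_minus_mult_var_y_neq_zero[of "var_x ^ n"]
    by (metis minus_diff_eq neg_equal_0_iff_equal)
  then have "gen_B n * to_fract (var_x ^ n * var_y - 1) = (to_fract (var_x - 1) :: 'a poly poly fract)"
    unfolding gen_B_def Fract_conv_to_fract by (simp del: to_fract_diff to_fract_mult)
  then show ?thesis
    by (simp add: to_fract_power)
qed

lemma deg_generators_B:
  assumes "n \<ge> 1" and "nonneg_degree_subring (B n) \<delta>"
  shows "\<delta> (to_fract var_x) = 0 \<and> \<delta> (to_fract var_y) = 0 \<and> \<delta> (gen_B n :: 'a::field poly poly fract) = 0"
proof -
  interpret nonneg_degree_subring "B n" \<delta> by fact
  obtain m where n: "n = Suc m"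
    using assms(1) by (cases n) auto
  show ?thesis
  proof (rule deg_eq_zero_of_relation)
    show "1 - to_fract var_x ^ m * to_fract var_y \<noteq> (0 :: 'a poly poly fract)"
      using one_minus_mult_var_y_neq_zero[of "var_x ^ m"]
      by (metis to_fract_1 to_fract_diff to_fract_eq_0_iff to_fract_mult to_fract_power)
    show "gen_B n * (to_fract var_x ^ Suc m * to_fract var_y - 1) = to_fract var_x - 1"
      using gen_B_relation[of n] n by simp
    have "var_x \<noteq> (1 :: 'a poly poly)"
      by (simp add: var_x_def one_pCons)
    then show "to_fract var_x - 1 \<noteq> (0 :: 'a poly poly fract)"
      by (metis to_fract_1 to_fract_eq_iff right_minus_eq)
  qed (simp_all add: to_fract_mem_B gen_B_mem_B var_x_def var_y_def)
qed

lemma deg_const_B: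
  assumes "nonneg_degree_subring (B n) \<delta>" and "c \<noteq> 0"
  shows "\<delta> (to_fract [:[:c:]:] :: 'a::field poly poly fract) = 0"
proof -
  interpret nonneg_degree_subring "B n" \<delta> by fact
  show ?thesis
    by (rule deg_unit[OF to_fract_mem_B[of "[:[:c:]:]" n] to_fract_mem_B[of "[:[:inverse c:]:]" n]])
      (simp add: \<open>c \<noteq> 0\<close> pCons_one flip: to_fract_mult)
qed

theorem theorem4p2:
  fixes n :: nat
  assumes "n \<ge> 1"
  shows "degree_rigid (B n :: 'a::field poly poly fract set)"
  unfolding degree_rigid_def
proof (intro allI impI ballI)
  fix \<delta> :: "'a poly poly fract \<Rightarrow> int" and r :: "'a poly poly fract"
  assume "nonneg_degree_function (B n) \<delta>" and r: "r \<in> B n" "r \<noteq> 0"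
  from this(1) have subring: "nonneg_degree_subring (B n) \<delta>"
    by (rule nonneg_degree_subring_B)
  interpret nonneg_degree_subring "B n" \<delta> by (fact subring)
  have constants: "degree_nonpos (to_fract [:[:c:]:])" for c
    using deg_const_B[OF subring, of c] to_fract_mem_B[of "[:[:c:]:]" n]
    unfolding degree_nonpos_def by fastforce
  have generators: "degree_nonpos (to_fract var_x)" "degree_nonpos (to_fract var_y)"
    "degree_nonpos (gen_B n)"
    using deg_generators_B[OF assms subring]
    by (simp_all add: degree_nonpos_def to_fract_mem_B gen_B_mem_B)
  from r(1) have "degree_nonpos r"
    by (induction rule: B_induct)
      (auto intro: constants generators degree_nonpos_zero degree_nonpos_add degree_nonpos_mult)
  then show "\<delta> r = 0"
    using r(2) by (rule deg_eq_zero_if_nonpos)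
qed

end
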